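(* $\mathrm{rad}(\mathcal{P}_\infty)\subset\mathcal{P}_2$. That is, if $r$ is a Hermitian symmetric polynomial on $\mathbb{C}^n$ with $r\ge0$ and $r^N(z,\overline z)=\|f(z)\|^2$ for some positive integer $N$ and holomorphic polynomial mapping $f$, then for all $z,w\in\mathbb{C}^n$ the $2\times2$ matrix $\begin{pmatrix} r(z,\overline z) & r(z,\overline w)\\ r(w,\overline z) & r(w,\overline w)\end{pmatrix}$ is non-negative definite.
   Context: A Hermitian symmetric polynomial is $r(z,\overline w)=\sum c_{\alpha\beta}z^\alpha\overline w^\beta$ with $c_{\alpha\beta}=\overline{c_{\beta\alpha}}$. $\mathcal{P}_\infty$: those $r$ with $r(z,\overline z)=\|h(z)\|^2$ for a holomorphic polynomial mapping $h$. $\mathrm{rad}(\mathcal{P}_\infty)$: those $r$ with $r(z,\overline z)\ge0$ for all $z$ and $r^N\in\mathcal{P}_\infty$ for some positive integer $N$. $\mathcal{P}_2$: those $r$ such that for all $z_1,z_2$ the matrix $(r(z_i,\overline{z_j}))_{i,j=1}^2$ is non-negative definite. *)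

theory Defs
  imports "HOL-Analysis.Analysis" "HOL-Library.Complex_Order"
begin

definition monom_eval :: "complex ^ 'n::finite \<Rightarrow> ('n \<Rightarrow> nat) \<Rightarrow> complex" where
  "monom_eval z \<alpha> = (\<Prod>i\<in>UNIV. (z $ i) ^ (\<alpha> i))"

text \<open>A polynomial in (z, conj w) given by its coefficients c alpha beta (finite support).\<close>
definition coeff_support :: "(('n \<Rightarrow> nat) \<Rightarrow> ('n \<Rightarrow> nat) \<Rightarrow> complex) \<Rightarrow> (('n \<Rightarrow> nat) \<times> ('n \<Rightarrow> nat)) set" where
  "coeff_support c = {p. c (fst p) (snd p) \<noteq> 0}"

definition hermitian_symmetric_poly :: "(('n \<Rightarrow> nat) \<Rightarrow> ('n \<Rightarrow> nat) \<Rightarrow> complex) \<Rightarrow> bool" where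
  "hermitian_symmetric_poly c \<longleftrightarrow> finite (coeff_support c) \<and> (\<forall>\<alpha> \<beta>. c \<alpha> \<beta> = cnj (c \<beta> \<alpha>))"

definition hsp_eval :: "(('n::finite \<Rightarrow> nat) \<Rightarrow> ('n \<Rightarrow> nat) \<Rightarrow> complex) \<Rightarrow> complex ^ 'n \<Rightarrow> complex ^ 'n \<Rightarrow> complex" where
  "hsp_eval c z w = (\<Sum>p\<in>coeff_support c. c (fst p) (snd p) * monom_eval z (fst p) * cnj (monom_eval w (snd p)))"

definition holo_poly :: "(('n \<Rightarrow> nat) \<Rightarrow> complex) \<Rightarrow> bool" where
  "holo_poly a \<longleftrightarrow> finite {\<alpha>. a \<alpha> \<noteq> 0}"

definition holo_poly_eval :: "(('n::finite \<Rightarrow> nat) \<Rightarrow> complex) \<Rightarrow> complex ^ 'n \<Rightarrow> complex" where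
  "holo_poly_eval a z = (\<Sum>\<alpha>\<in>{\<alpha>. a \<alpha> \<noteq> 0}. a \<alpha> * monom_eval z \<alpha>)"

definition nonneg_definite :: "nat \<Rightarrow> (nat \<Rightarrow> nat \<Rightarrow> complex) \<Rightarrow> bool" where
  "nonneg_definite k M \<longleftrightarrow> (\<forall>v :: nat \<Rightarrow> complex. 0 \<le> (\<Sum>i<k. \<Sum>j<k. cnj (v i) * M i j * v j))"

end

theory Submission
  imports Defs "HOL-Computational_Algebra.Polynomial"
begin

(* Replacing conj w by an independent variable \<zeta>, the function
   r(z, \<zeta>)^N - \<Sum>j f_j(z) conj(f_j(conj \<zeta>)) is a polynomial in (z, \<zeta>) that vanishes on the
   totally real set \<zeta> = conj z, hence vanishes identically; so r(z, conj w)^N = \<Sum>j f_j(z) conj(f_j(w)).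
   Cauchy-Schwarz then gives |r(z, conj w)|^(2N) \<le> (r(z, conj z) r(w, conj w))^N, and taking N-th
   roots shows that the 2x2 Hermitian matrix has non-negative diagonal and determinant. *)

lemma poly_eq_0_if_vanishes_on_reals:
  fixes p :: "complex poly"
  assumes "\<And>x::real. poly p (of_real x) = 0"
  shows "p = 0"
proof (rule ccontr)
  assume "p \<noteq> 0"
  then have "finite {x. poly p x = 0}" by (rule poly_roots_finite)
  moreover have "range (of_real :: real \<Rightarrow> complex) \<subseteq> {x. poly p x = 0}"
    using assms by auto
  moreover have "infinite (range (of_real :: real \<Rightarrow> complex))"
    using finite_imageD[of "of_real :: real \<Rightarrow> complex" UNIV] infinite_UNIV_char_0
    by (auto simp: inj_on_def)
  ultimately show False using finite_subset by blast
qed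

lemma sum_powers_eq_0_if_vanishes_at_cnj:
  fixes C :: "'a \<Rightarrow> complex" and J L :: "'a \<Rightarrow> nat"
  assumes "\<And>a. (\<Sum>p\<in>S. C p * a ^ J p * cnj a ^ L p) = 0"
  shows "(\<Sum>p\<in>S. C p * a ^ J p * b ^ L p) = 0"
proof -
  \<comment> \<open>Q x y vanishes for real x, y by assumption; being a polynomial in each variable, it then
      vanishes first for complex x and then for complex y.\<close>
  define Q where "Q x y = (\<Sum>p\<in>S. C p * (x + \<i> * y) ^ J p * (x - \<i> * y) ^ L p)" for x y
  have Q_real: "Q (of_real x) (of_real y) = 0" for x y :: real
    using assms[of "of_real x + \<i> * of_real y"] unfolding Q_def by simp
  have Q_real_snd: "Q x (of_real y) = 0" for x and y :: real
  proof -
    define P where "P = (\<Sum>p\<in>S. smult (C p) ([:\<i> * of_real y, 1:] ^ J p * [:- \<i> * of_real y, 1:] ^ L p))"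
    have P_eval: "poly P t = Q t (of_real y)" for t
      unfolding P_def Q_def poly_sum by (simp add: algebra_simps)
    have "P = 0" using Q_real P_eval by (intro poly_eq_0_if_vanishes_on_reals) auto
    then show ?thesis using P_eval[of x] by simp
  qed
  have Q_zero: "Q x y = 0" for x y
  proof -
    define P where "P = (\<Sum>p\<in>S. smult (C p) ([:x, \<i>:] ^ J p * [:x, - \<i>:] ^ L p))"
    have P_eval: "poly P t = Q x t" for t
      unfolding P_def Q_def poly_sum by (simp add: algebra_simps)
    have "P = 0" using Q_real_snd P_eval by (intro poly_eq_0_if_vanishes_on_reals) auto
    then show ?thesis using P_eval[of y] by simp
  qed
  have "(a + b) / 2 + \<i> * ((a - b) / (2 * \<i>)) = a" "(a + b) / 2 - \<i> * ((a - b) / (2 * \<i>)) = b"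
    by (auto simp: field_simps)
  then show ?thesis using Q_zero[of "(a + b) / 2" "(a - b) / (2 * \<i>)"] unfolding Q_def by simp
qed

definition vec_cnj :: "complex ^ 'n \<Rightarrow> complex ^ 'n" where
  "vec_cnj w = (\<chi> i. cnj (w $ i))"

lemma vec_cnj_vec_cnj [simp]: "vec_cnj (vec_cnj w) = w"
  by (simp add: vec_cnj_def vec_eq_iff)

lemma cnj_monom_eval: "cnj (monom_eval w \<beta>) = monom_eval (vec_cnj w) \<beta>"
  unfolding monom_eval_def vec_cnj_def by (simp add: cnj_prod)

lemma monom_eval_add: "monom_eval z (\<lambda>i. \<alpha> i + \<beta> i) = monom_eval z \<alpha> * monom_eval z \<beta>"
  unfolding monom_eval_def by (simp add: power_add prod.distrib)

lemma monom_eval_0 [simp]: "monom_eval z (\<lambda>i. 0) = 1"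
  unfolding monom_eval_def by simp

definition vec_upd :: "'a ^ 'n \<Rightarrow> 'n \<Rightarrow> 'a \<Rightarrow> 'a ^ 'n" where
  "vec_upd z k a = (\<chi> i. if i = k then a else z $ i)"

lemma vec_upd_nth: "vec_upd z k a $ i = (if i = k then a else z $ i)"
  by (simp add: vec_upd_def)

lemma vec_upd_same [simp]: "vec_upd z k (z $ k) = z"
  by (simp add: vec_upd_def vec_eq_iff)

lemma monom_eval_vec_upd:
  "monom_eval (vec_upd z k a) \<alpha> = a ^ \<alpha> k * (\<Prod>i\<in>UNIV - {k}. (z $ i) ^ \<alpha> i)"
  unfolding monom_eval_def vec_upd_def
  by (subst prod.remove[of UNIV k]) (auto intro!: prod.cong)

lemma sum_monom_eval_eq_0_if_vanishes_at_cnj_coordinate: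
  fixes D :: "'a \<Rightarrow> complex" and A B :: "'a \<Rightarrow> ('n::finite \<Rightarrow> nat)"
  assumes "\<And>a. (\<Sum>p\<in>S. D p * monom_eval (vec_upd z k a) (A p) * monom_eval (vec_upd \<zeta> k (cnj a)) (B p)) = 0"
  shows "(\<Sum>p\<in>S. D p * monom_eval z (A p) * monom_eval \<zeta> (B p)) = 0"
proof -
  define C where
    "C p = D p * (\<Prod>i\<in>UNIV - {k}. (z $ i) ^ A p i) * (\<Prod>i\<in>UNIV - {k}. (\<zeta> $ i) ^ B p i)" for p
  have restrict: "(\<Sum>p\<in>S. D p * monom_eval (vec_upd z k a) (A p) * monom_eval (vec_upd \<zeta> k b) (B p))
      = (\<Sum>p\<in>S. C p * a ^ A p k * b ^ B p k)" for a b
    unfolding C_def monom_eval_vec_upd by (simp add: algebra_simps)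
  have "(\<Sum>p\<in>S. C p * (z $ k) ^ A p k * (\<zeta> $ k) ^ B p k) = 0"
    by (rule sum_powers_eq_0_if_vanishes_at_cnj) (use assms in \<open>simp add: restrict\<close>)
  then show ?thesis using restrict[of "z $ k" "\<zeta> $ k"] by simp
qed

lemma sum_monom_eval_eq_0_if_vanishes_at_vec_cnj:
  fixes D :: "'a \<Rightarrow> complex" and A B :: "'a \<Rightarrow> ('n::finite \<Rightarrow> nat)"
  assumes "\<And>z. (\<Sum>p\<in>S. D p * monom_eval z (A p) * monom_eval (vec_cnj z) (B p)) = 0"
  shows "(\<Sum>p\<in>S. D p * monom_eval z (A p) * monom_eval \<zeta> (B p)) = 0"
proof -
  \<comment> \<open>Free the coordinates of \<zeta> from those of z one at a time.\<close>
  have "(\<Sum>p\<in>S. D p * monom_eval z (A p) * monom_eval \<zeta> (B p)) = 0"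
    if "finite K" "\<forall>i. i \<notin> K \<longrightarrow> \<zeta> $ i = cnj (z $ i)" for K :: "'n set" and z \<zeta>
    using that
  proof (induction K arbitrary: z \<zeta> rule: finite_induct)
    case empty
    then have "\<zeta> = vec_cnj z" by (simp add: vec_cnj_def vec_eq_iff)
    then show ?case using assms by simp
  next
    case (insert k K)
    have upd_prems: "\<forall>i. i \<notin> K \<longrightarrow> vec_upd \<zeta> k (cnj a) $ i = cnj (vec_upd z k a $ i)" for a
      using insert.prems by (simp add: vec_upd_nth)
    show ?case
      by (rule sum_monom_eval_eq_0_if_vanishes_at_cnj_coordinate[where k = k and z = z and \<zeta> = \<zeta>])
         (rule insert.IH[OF upd_prems])
  qed
  from this[of UNIV] show ?thesis by simp
qed

(* Polynomials in independent variables z and \<zeta> are kept as lists of terms rather than as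
   coefficient functions, so that a product is a plain list comprehension. *)
definition bipoly_eval ::
    "(complex \<times> ('n \<Rightarrow> nat) \<times> ('n \<Rightarrow> nat)) list \<Rightarrow> complex ^ 'n::finite \<Rightarrow> complex ^ 'n \<Rightarrow> complex" where
  "bipoly_eval ts z \<zeta> = (\<Sum>(d, \<alpha>, \<beta>)\<leftarrow>ts. d * monom_eval z \<alpha> * monom_eval \<zeta> \<beta>)"

definition bipoly_mult ::
    "(complex \<times> ('n \<Rightarrow> nat) \<times> ('n \<Rightarrow> nat)) list \<Rightarrow> (complex \<times> ('n \<Rightarrow> nat) \<times> ('n \<Rightarrow> nat)) list
     \<Rightarrow> (complex \<times> ('n \<Rightarrow> nat) \<times> ('n \<Rightarrow> nat)) list" where
  "bipoly_mult ts us =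
     [(d * e, \<lambda>i. \<alpha> i + \<gamma> i, \<lambda>i. \<beta> i + \<delta> i). (d, \<alpha>, \<beta>) \<leftarrow> ts, (e, \<gamma>, \<delta>) \<leftarrow> us]"

definition is_bipoly :: "(complex ^ 'n::finite \<Rightarrow> complex ^ 'n \<Rightarrow> complex) \<Rightarrow> bool" where
  "is_bipoly g \<longleftrightarrow> (\<exists>ts. g = bipoly_eval ts)"

lemma bipoly_eval_Nil [simp]: "bipoly_eval [] z \<zeta> = 0"
  by (simp add: bipoly_eval_def)

lemma bipoly_eval_Cons [simp]:
  "bipoly_eval ((d, \<alpha>, \<beta>) # ts) z \<zeta> = d * monom_eval z \<alpha> * monom_eval \<zeta> \<beta> + bipoly_eval ts z \<zeta>"
  by (simp add: bipoly_eval_def)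

lemma bipoly_eval_append: "bipoly_eval (ts @ us) z \<zeta> = bipoly_eval ts z \<zeta> + bipoly_eval us z \<zeta>"
  by (simp add: bipoly_eval_def)

lemma bipoly_eval_mult: "bipoly_eval (bipoly_mult ts us) z \<zeta> = bipoly_eval ts z \<zeta> * bipoly_eval us z \<zeta>"
  unfolding bipoly_mult_def
proof (induction ts)
  case Nil
  then show ?case by simp
next
  case (Cons t ts)
  obtain d \<alpha> \<beta> where t: "t = (d, \<alpha>, \<beta>)" by (cases t)
  have "bipoly_eval [(d * e, \<lambda>i. \<alpha> i + \<gamma> i, \<lambda>i. \<beta> i + \<delta> i). (e, \<gamma>, \<delta>) \<leftarrow> us] z \<zeta>
      = d * monom_eval z \<alpha> * monom_eval \<zeta> \<beta> * bipoly_eval us z \<zeta>"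
    by (induction us) (auto simp: monom_eval_add algebra_simps)
  then show ?case using Cons.IH by (simp add: t bipoly_eval_append algebra_simps)
qed

lemma is_bipoly_const: "is_bipoly (\<lambda>z \<zeta>. d)"
  unfolding is_bipoly_def
  by (rule exI[of _ "[(d, \<lambda>i. 0, \<lambda>i. 0)]"]) (simp add: bipoly_eval_def fun_eq_iff)

lemma is_bipoly_add:
  assumes "is_bipoly g" "is_bipoly h"
  shows "is_bipoly (\<lambda>z \<zeta>. g z \<zeta> + h z \<zeta>)"
proof -
  obtain ts us where "g = bipoly_eval ts" "h = bipoly_eval us"
    using assms unfolding is_bipoly_def by blast
  then show ?thesis
    unfolding is_bipoly_def by (intro exI[of _ "ts @ us"]) (simp add: fun_eq_iff bipoly_eval_append)
qed

lemma is_bipoly_mult: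
  assumes "is_bipoly g" "is_bipoly h"
  shows "is_bipoly (\<lambda>z \<zeta>. g z \<zeta> * h z \<zeta>)"
proof -
  obtain ts us where "g = bipoly_eval ts" "h = bipoly_eval us"
    using assms unfolding is_bipoly_def by blast
  then show ?thesis
    unfolding is_bipoly_def by (intro exI[of _ "bipoly_mult ts us"]) (simp add: fun_eq_iff bipoly_eval_mult)
qed

lemma is_bipoly_diff:
  assumes "is_bipoly g" "is_bipoly h"
  shows "is_bipoly (\<lambda>z \<zeta>. g z \<zeta> - h z \<zeta>)"
proof -
  have "is_bipoly (\<lambda>z \<zeta>. g z \<zeta> + (- 1) * h z \<zeta>)"
    by (intro is_bipoly_add is_bipoly_mult is_bipoly_const assms)
  then show ?thesis by simp
qed

lemma is_bipoly_power: "is_bipoly g \<Longrightarrow> is_bipoly (\<lambda>z \<zeta>. g z \<zeta> ^ n)"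
  by (induction n) (simp_all add: is_bipoly_const is_bipoly_mult)

lemma is_bipoly_sum: "(\<And>j. j < (m::nat) \<Longrightarrow> is_bipoly (g j)) \<Longrightarrow> is_bipoly (\<lambda>z \<zeta>. \<Sum>j<m. g j z \<zeta>)"
  by (induction m) (simp_all add: is_bipoly_const is_bipoly_add)

lemma is_bipoly_sum_monom_eval:
  assumes "finite S"
  shows "is_bipoly (\<lambda>z \<zeta>. \<Sum>p\<in>S. D p * monom_eval z (A p) * monom_eval \<zeta> (B p))"
proof -
  obtain l where l: "set l = S" "distinct l" using finite_distinct_list[OF assms] by blast
  have "(\<Sum>p\<in>S. D p * monom_eval z (A p) * monom_eval \<zeta> (B p))
      = bipoly_eval (map (\<lambda>p. (D p, A p, B p)) l) z \<zeta>" for z \<zeta>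
    unfolding bipoly_eval_def l(1)[symmetric] sum.distinct_set_conv_list[OF l(2)] by (simp add: o_def)
  then show ?thesis unfolding is_bipoly_def by blast
qed

lemma bipoly_eval_conv_sum_nth:
  "bipoly_eval ts z \<zeta> = (\<Sum>i<length ts. fst (ts ! i) * monom_eval z (fst (snd (ts ! i)))
                                          * monom_eval \<zeta> (snd (snd (ts ! i))))"
  unfolding bipoly_eval_def sum_list_sum_nth atLeast0LessThan by (simp add: case_prod_beta)

lemma is_bipoly_eq_0_if_vanishes_at_vec_cnj:
  assumes "is_bipoly g" "\<And>z. g z (vec_cnj z) = 0"
  shows "g z \<zeta> = 0"
proof -
  obtain ts where "g = bipoly_eval ts" using assms(1) unfolding is_bipoly_def by blast
  with assms(2) show ?thesis
    unfolding bipoly_eval_conv_sum_nth by (simp add: sum_monom_eval_eq_0_if_vanishes_at_vec_cnj)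
qed

lemma hsp_eval_conv_monom_eval:
  "hsp_eval c z w
     = (\<Sum>p\<in>coeff_support c. c (fst p) (snd p) * monom_eval z (fst p) * monom_eval (vec_cnj w) (snd p))"
  unfolding hsp_eval_def by (simp add: cnj_monom_eval)

lemma is_bipoly_hsp_eval:
  assumes "finite (coeff_support c)"
  shows "is_bipoly (\<lambda>z \<zeta>. hsp_eval c z (vec_cnj \<zeta>))"
  unfolding hsp_eval_conv_monom_eval vec_cnj_vec_cnj by (rule is_bipoly_sum_monom_eval[OF assms])

lemma is_bipoly_holo_poly_eval:
  assumes "holo_poly a"
  shows "is_bipoly (\<lambda>z \<zeta>. holo_poly_eval a z)"
  using is_bipoly_sum_monom_eval[where S = "{\<alpha>. a \<alpha> \<noteq> 0}" and D = a and A = "\<lambda>\<alpha>. \<alpha>" and B = "\<lambda>_ _. 0"] assms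
  unfolding holo_poly_def holo_poly_eval_def by simp

lemma is_bipoly_cnj_holo_poly_eval:
  assumes "holo_poly a"
  shows "is_bipoly (\<lambda>z \<zeta>. cnj (holo_poly_eval a (vec_cnj \<zeta>)))"
  using is_bipoly_sum_monom_eval[where S = "{\<alpha>. a \<alpha> \<noteq> 0}" and D = "\<lambda>\<alpha>. cnj (a \<alpha>)"
                                  and A = "\<lambda>_ _. 0" and B = "\<lambda>\<alpha>. \<alpha>"] assms
  unfolding holo_poly_def holo_poly_eval_def by (simp add: cnj_sum cnj_monom_eval)

lemma hsp_eval_power_polarize:
  fixes f :: "nat \<Rightarrow> ('n::finite \<Rightarrow> nat) \<Rightarrow> complex"
  assumes "finite (coeff_support c)" "\<forall>j<m. holo_poly (f j)"
    and "\<And>z. hsp_eval c z z ^ N = (\<Sum>j<m. holo_poly_eval (f j) z * cnj (holo_poly_eval (f j) z))"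
  shows "hsp_eval c z w ^ N = (\<Sum>j<m. holo_poly_eval (f j) z * cnj (holo_poly_eval (f j) w))"
proof -
  define G where "G z \<zeta> = hsp_eval c z (vec_cnj \<zeta>) ^ N
      - (\<Sum>j<m. holo_poly_eval (f j) z * cnj (holo_poly_eval (f j) (vec_cnj \<zeta>)))" for z \<zeta>
  have "is_bipoly G"
    unfolding G_def using assms(1,2)
    by (intro is_bipoly_diff is_bipoly_power is_bipoly_hsp_eval is_bipoly_sum is_bipoly_mult
          is_bipoly_holo_poly_eval is_bipoly_cnj_holo_poly_eval) auto
  moreover have "G z (vec_cnj z) = 0" for z
    unfolding G_def by (simp add: assms(3))
  ultimately have "G z (vec_cnj w) = 0" by (rule is_bipoly_eq_0_if_vanishes_at_vec_cnj)
  then show ?thesis unfolding G_def by simp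
qed

lemma hsp_eval_swap:
  assumes "hermitian_symmetric_poly c"
  shows "hsp_eval c w z = cnj (hsp_eval c z w)"
proof -
  have c_swap: "c \<beta> \<alpha> = cnj (c \<alpha> \<beta>)" for \<alpha> \<beta>
    using assms unfolding hermitian_symmetric_poly_def by blast
  have swap_mem: "prod.swap p \<in> coeff_support c" if "p \<in> coeff_support c" for p
    using that c_swap[of "fst p" "snd p"] by (simp add: coeff_support_def)
  have "hsp_eval c w z
      = (\<Sum>p\<in>coeff_support c. c (snd p) (fst p) * monom_eval w (snd p) * cnj (monom_eval z (fst p)))"
    unfolding hsp_eval_def
    by (rule sum.reindex_bij_witness[of _ prod.swap prod.swap]) (simp_all add: swap_mem)
  also have "\<dots> = cnj (hsp_eval c z w)"
    unfolding hsp_eval_def cnj_sum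
    by (rule sum.cong[OF refl]) (simp add: c_swap[of "fst _" "snd _"])
  finally show ?thesis .
qed

lemma nonneg_complexE:
  assumes "0 \<le> (x::complex)"
  obtains a where "0 \<le> a" "x = of_real a"
  using assms by (intro that[of "Re x"]) (auto simp: less_eq_complex_def complex_eq_iff)

lemma cmod_sq_le_if_power_eq_sum_mult_cnj:
  fixes b :: complex and a d :: real and u v :: "nat \<Rightarrow> complex"
  assumes "N > 0" "0 \<le> a" "0 \<le> d"
    and "b ^ N = (\<Sum>j<m. u j * cnj (v j))"
    and "a ^ N = (\<Sum>j<m. (cmod (u j))\<^sup>2)" "d ^ N = (\<Sum>j<m. (cmod (v j))\<^sup>2)"
  shows "(cmod b)\<^sup>2 \<le> a * d"
proof -
  have "cmod b ^ N \<le> (\<Sum>j<m. cmod (u j) * cmod (v j))"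
    unfolding norm_power[symmetric] assms(4) by (rule order_trans[OF norm_sum]) (simp add: norm_mult)
  then have "(cmod b ^ N)\<^sup>2 \<le> (\<Sum>j<m. cmod (u j) * cmod (v j))\<^sup>2"
    by (rule power_mono) simp
  also have "\<dots> \<le> (\<Sum>j<m. (cmod (u j))\<^sup>2) * (\<Sum>j<m. (cmod (v j))\<^sup>2)"
    by (rule Cauchy_Schwarz_ineq_sum)
  also have "\<dots> = (a * d) ^ N"
    by (simp add: assms(5,6) power_mult_distrib)
  finally have "((cmod b)\<^sup>2) ^ N \<le> (a * d) ^ N"
    by (metis power_mult mult.commute)
  then show ?thesis using assms(1-3) by simp
qed

lemma nonneg_definite_2_hermitian:
  fixes a d :: real and b :: complex
  assumes "0 \<le> a" "0 \<le> d" "(cmod b)\<^sup>2 \<le> a * d"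
  shows "nonneg_definite 2 (\<lambda>i j. if i = 0 then (if j = 0 then of_real a else b)
                                   else (if j = 0 then cnj b else of_real d))"
  unfolding nonneg_definite_def
proof
  fix v :: "nat \<Rightarrow> complex"
  define x where "x = cnj (v 0) * b * v 1"
  have "(cmod b)\<^sup>2 \<le> (sqrt a * sqrt d)\<^sup>2"
    using assms by (simp add: power_mult_distrib)
  then have "cmod b \<le> sqrt a * sqrt d"
    using assms(1,2) by (simp add: power_mono_iff[symmetric])
  then have "cmod b * (cmod (v 0) * cmod (v 1)) \<le> sqrt a * sqrt d * (cmod (v 0) * cmod (v 1))"
    by (rule mult_right_mono) simp
  then have "2 * cmod x \<le> 2 * (sqrt a * cmod (v 0)) * (sqrt d * cmod (v 1))"
    unfolding x_def by (simp add: norm_mult algebra_simps)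
  also have "\<dots> \<le> (sqrt a * cmod (v 0))\<^sup>2 + (sqrt d * cmod (v 1))\<^sup>2"
    by (rule sum_squares_bound)
  also have "\<dots> = a * (cmod (v 0))\<^sup>2 + d * (cmod (v 1))\<^sup>2"
    using assms(1,2) by (simp add: power_mult_distrib)
  finally have "0 \<le> a * (cmod (v 0))\<^sup>2 + d * (cmod (v 1))\<^sup>2 + 2 * Re x"
    using abs_Re_le_cmod[of x] by linarith
  moreover have "cnj (v i) * v i = of_real ((cmod (v i))\<^sup>2)" for i
    by (metis complex_norm_square mult.commute)
  then have "(\<Sum>i<2. \<Sum>j<2. cnj (v i) * (if i = 0 then (if j = 0 then of_real a else b)
                                          else (if j = 0 then cnj b else of_real d)) * v j)
      = of_real (a * (cmod (v 0))\<^sup>2 + d * (cmod (v 1))\<^sup>2) + (x + cnj x)"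
    unfolding x_def by (simp add: numeral_2_eq_2 algebra_simps)
  ultimately show "0 \<le> (\<Sum>i<2. \<Sum>j<2. cnj (v i) * (if i = 0 then (if j = 0 then of_real a else b)
                                          else (if j = 0 then cnj b else of_real d)) * v j)"
    by (simp add: complex_add_cnj less_eq_complex_def)
qed

theorem lemma7p1:
  fixes c :: "('n::finite \<Rightarrow> nat) \<Rightarrow> ('n \<Rightarrow> nat) \<Rightarrow> complex"
    and N m :: nat
    and f :: "nat \<Rightarrow> ('n \<Rightarrow> nat) \<Rightarrow> complex"
  assumes herm: "hermitian_symmetric_poly c"
    and nonneg: "\<forall>z. 0 \<le> hsp_eval c z z"
    and Npos: "N > 0"
    and fpoly: "\<forall>j<m. holo_poly (f j)"
    and sos: "\<forall>z. (hsp_eval c z z) ^ N = complex_of_real (\<Sum>j<m. (cmod (holo_poly_eval (f j) z))\<^sup>2)"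
  shows "\<forall>z w :: complex ^ 'n. nonneg_definite 2
           (\<lambda>i j. hsp_eval c (if i = 0 then z else w) (if j = 0 then z else w))"
proof (intro allI)
  fix z w :: "complex ^ 'n"
  let ?F = "\<lambda>j. holo_poly_eval (f j)"
  have fin: "finite (coeff_support c)"
    using herm unfolding hermitian_symmetric_poly_def by blast
  have "hsp_eval c u u ^ N = (\<Sum>j<m. ?F j u * cnj (?F j u))" for u
    using sos unfolding of_real_sum complex_norm_square by blast
  then have polarized: "hsp_eval c z w ^ N = (\<Sum>j<m. ?F j z * cnj (?F j w))"
    by (rule hsp_eval_power_polarize[OF fin fpoly])
  obtain a d where a: "0 \<le> a" "hsp_eval c z z = of_real a" and d: "0 \<le> d" "hsp_eval c w w = of_real d"
    using nonneg by (meson nonneg_complexE)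
  have "a ^ N = (\<Sum>j<m. (cmod (?F j z))\<^sup>2)" "d ^ N = (\<Sum>j<m. (cmod (?F j w))\<^sup>2)"
    using sos a(2) d(2) by (metis of_real_eq_iff of_real_power)+
  then have "(cmod (hsp_eval c z w))\<^sup>2 \<le> a * d"
    by (rule cmod_sq_le_if_power_eq_sum_mult_cnj[OF Npos a(1) d(1) polarized])
  then have "nonneg_definite 2 (\<lambda>i j. if i = 0 then (if j = 0 then of_real a else hsp_eval c z w)
                                     else (if j = 0 then cnj (hsp_eval c z w) else of_real d))"
    using a(1) d(1) by (intro nonneg_definite_2_hermitian)
  moreover have "(\<lambda>(i::nat) (j::nat). hsp_eval c (if i = 0 then z else w) (if j = 0 then z else w))
      = (\<lambda>i j. if i = 0 then (if j = 0 then of_real a else hsp_eval c z w)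
               else (if j = 0 then cnj (hsp_eval c z w) else of_real d))"
    using a(2) d(2) hsp_eval_swap[OF herm, of w z] by (auto simp: fun_eq_iff)
  ultimately show "nonneg_definite 2 (\<lambda>i j. hsp_eval c (if i = 0 then z else w) (if j = 0 then z else w))"
    by (simp only:)
qed

end
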